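(* Let $\mathcal I$ be an ideal on $\omega$. Then (1) $\mathrm{non}(\mathcal I\text{-p},\mathcal I\text{-}\sigma\text{-u})=\mathfrak b_\sigma(\mathcal I)$; (2) $\mathrm{non}(\mathcal I\text{-p},\mathcal I\text{-qn})=\mathfrak b_s(\mathcal I)$; (3) $\mathrm{non}(\mathcal I\text{-qn},\mathcal I\text{-}\sigma\text{-u})=\mathrm{add}_\omega(\mathcal I)$.
   Context: An ideal on $\omega$ is a family $\mathcal I\subseteq\mathcal P(\omega)$ closed under finite unions and subsets, containing all finite sets, with $\omega\notin\mathcal I$. A real sequence $(a_n)$ is $\mathcal I$-convergent to $0$ if $\{n:|a_n|\ge\varepsilon\}\in\mathcal I$ for all $\varepsilon>0$. For a sequence $(f_n)$ of real functions on a set $X$: $\mathcal I$-p means $(f_n(x))$ is $\mathcal I$-convergent to $0$ for each $x$; $\mathcal I$-u means $\{n:\exists x\in X\,(|f_n(x)|\ge\varepsilon)\}\in\mathcal I$ for each $\varepsilon>0$; $\mathcal I$-$\sigma$-u means $X=\bigcup_{k\in\omega}X_k$ with $(f_n\restriction X_k)$ $\mathcal I$-u convergent to $0$ for each $k$; $\mathcal I$-qn means there is a sequence $(\varepsilon_n)$ of positive reals $\mathcal I$-convergent to $0$ with $\{n:|f_n(x)|\ge\varepsilon_n\}\in\mathcal I$ for each $x$. $\mathcal C(X)$ = continuous real functions on $X$. Normal space = Hausdorff space in which disjoint closed sets have disjoint open neighbourhoods. $(\alpha,\beta)$ is the class of normal spaces $X$ such that for all $(f_n)$ in $\mathcal C(X)$,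 $f_n\to0$ in sense $\alpha$ iff in sense $\beta$; $\mathrm{non}(\alpha,\beta)$ is the least cardinality of a normal space not in $(\alpha,\beta)$, or $\infty$ if none. Cardinals (with $\min\emptyset=\infty$): for ideals $\mathcal I,\mathcal J,\mathcal K$ on $\omega$, let $\widehat{\mathcal P}_{\mathcal I}$ be the set of sequences $(A_n)\in\mathcal I^\omega$ of pairwise disjoint sets, $\mathcal P_{\mathcal I}$ those in $\widehat{\mathcal P}_{\mathcal I}$ with $\bigcup_nA_n=\omega$, and $\mathcal M_{\mathcal I}$ the set of sequences $(E_k)\in\mathcal I^\omega$ with $E_k\subseteq E_{k+1}$ for all $k$. $\mathfrak b_s(\mathcal I,\mathcal J,\mathcal K)=\min\{|\mathcal E|:\mathcal E\subseteq\widehat{\mathcal P}_{\mathcal K}$ and for every $(A_n)\in\mathcal P_{\mathcal J}$ there is $(E_n)\in\mathcal E$ with $\bigcup_{n}(A_{n+1}\cap\bigcup_{i\le n}E_i)\notin\mathcal I\}$; $\mathfrak b_\sigma(\mathcal I,\mathcal J)=\min\{|\mathcal E|:\mathcal E\subseteq\mathcal M_{\mathcal I}$ and for every $(A_n)\in\mathcal M_{\mathcal J}$ there is $(E_n)\in\mathcal E$ with $E_n\not\subseteq A_n$ for infinitely many $n\}$; $\mathrm{add}_\omega(\mathcal I,\mathcal J)=\min\{|\mathcal A|:\mathcal A\subseteq\mathcal I$ and for every $(B_n)\in\mathcal J^\omega$ there is $A\in\mathcal A$ with $A\not\subseteq B_n$ for all $n\}$. $\mathfrak b_s(\mathcal I)=\mathfrak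 b_s(\mathcal I,\mathcal I,\mathcal I)$, $\mathfrak b_\sigma(\mathcal I)=\mathfrak b_\sigma(\mathcal I,\mathcal I)$, $\mathrm{add}_\omega(\mathcal I)=\mathrm{add}_\omega(\mathcal I,\mathcal I)$. *)

theory Defs
  imports "HOL-Analysis.Analysis" "HOL-Library.Equipollence"
begin

definition is_ideal :: "nat set set \<Rightarrow> bool" where
  "is_ideal I \<longleftrightarrow>
     (\<forall>A\<in>I. \<forall>B\<in>I. A \<union> B \<in> I) \<and>
     (\<forall>A\<in>I. \<forall>B. B \<subseteq> A \<longrightarrow> B \<in> I) \<and>
     (\<forall>A. finite A \<longrightarrow> A \<in> I) \<and>
     UNIV \<notin> I"

definition Iconv :: "nat set set \<Rightarrow> (nat \<Rightarrow> real) \<Rightarrow> bool" where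
  "Iconv I a \<longleftrightarrow> (\<forall>\<epsilon>>0. {n. \<bar>a n\<bar> \<ge> \<epsilon>} \<in> I)"

definition Ip :: "nat set set \<Rightarrow> 'a set \<Rightarrow> (nat \<Rightarrow> 'a \<Rightarrow> real) \<Rightarrow> bool" where
  "Ip I X f \<longleftrightarrow> (\<forall>x\<in>X. Iconv I (\<lambda>n. f n x))"

definition Iu :: "nat set set \<Rightarrow> 'a set \<Rightarrow> (nat \<Rightarrow> 'a \<Rightarrow> real) \<Rightarrow> bool" where
  "Iu I X f \<longleftrightarrow> (\<forall>\<epsilon>>0. {n. \<exists>x\<in>X. \<bar>f n x\<bar> \<ge> \<epsilon>} \<in> I)"

definition Isu :: "nat set set \<Rightarrow> 'a set \<Rightarrow> (nat \<Rightarrow> 'a \<Rightarrow> real) \<Rightarrow> bool" where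
  "Isu I X f \<longleftrightarrow> (\<exists>Xk :: nat \<Rightarrow> 'a set. X = (\<Union>k. Xk k) \<and> (\<forall>k. Iu I (Xk k) f))"

definition Iqn :: "nat set set \<Rightarrow> 'a set \<Rightarrow> (nat \<Rightarrow> 'a \<Rightarrow> real) \<Rightarrow> bool" where
  "Iqn I X f \<longleftrightarrow> (\<exists>eps :: nat \<Rightarrow> real. (\<forall>n. eps n > 0) \<and> Iconv I eps \<and>
                      (\<forall>x\<in>X. {n. \<bar>f n x\<bar> \<ge> eps n} \<in> I))"

definition normal_T2 :: "'a topology \<Rightarrow> bool" where
  "normal_T2 X \<longleftrightarrow> Hausdorff_space X \<and> normal_space X"

definition in_class ::
  "('a set \<Rightarrow> (nat \<Rightarrow> 'a \<Rightarrow> real) \<Rightarrow> bool) \<Rightarrow> ('a set \<Rightarrow> (nat \<Rightarrow> 'a \<Rightarrow> real) \<Rightarrow> bool)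
    \<Rightarrow> 'a topology \<Rightarrow> bool" where
  "in_class \<alpha> \<beta> X \<longleftrightarrow>
     (\<forall>f :: nat \<Rightarrow> 'a \<Rightarrow> real. (\<forall>n. continuous_map X euclideanreal (f n)) \<longrightarrow>
        (\<alpha> (topspace X) f \<longleftrightarrow> \<beta> (topspace X) f))"

definition hatP :: "nat set set \<Rightarrow> (nat \<Rightarrow> nat set) set" where
  "hatP I = {A. (\<forall>n. A n \<in> I) \<and> disjoint_family A}"

definition PP :: "nat set set \<Rightarrow> (nat \<Rightarrow> nat set) set" where
  "PP I = {A. A \<in> hatP I \<and> (\<Union>n. A n) = UNIV}"

definition MM :: "nat set set \<Rightarrow> (nat \<Rightarrow> nat set) set" where
  "MM I = {E. (\<forall>k. E k \<in> I) \<and> (\<forall>k. E k \<subseteq> E (Suc k))}"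

text \<open>Witness families for the cardinal invariants (the cardinal is the least size
  of a witness family, or infinity if none exists).\<close>
definition bs_witness :: "nat set set \<Rightarrow> nat set set \<Rightarrow> nat set set \<Rightarrow> (nat \<Rightarrow> nat set) set \<Rightarrow> bool" where
  "bs_witness I J K \<E> \<longleftrightarrow> \<E> \<subseteq> hatP K \<and>
     (\<forall>A\<in>PP J. \<exists>E\<in>\<E>. (\<Union>n. A (Suc n) \<inter> (\<Union>i\<le>n. E i)) \<notin> I)"

definition bsigma_witness :: "nat set set \<Rightarrow> nat set set \<Rightarrow> (nat \<Rightarrow> nat set) set \<Rightarrow> bool" where
  "bsigma_witness I J \<E> \<longleftrightarrow> \<E> \<subseteq> MM I \<and>
     (\<forall>A\<in>MM J. \<exists>E\<in>\<E>. infinite {n. \<not> E n \<subseteq> A n})"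

definition addw_witness :: "nat set set \<Rightarrow> nat set set \<Rightarrow> nat set set \<Rightarrow> bool" where
  "addw_witness I J \<A> \<longleftrightarrow> \<A> \<subseteq> I \<and>
     (\<forall>B :: nat \<Rightarrow> nat set. (\<forall>n. B n \<in> J) \<longrightarrow> (\<exists>A\<in>\<A>. \<forall>n. \<not> A \<subseteq> B n))"

end

theory Submission
  imports Defs
begin

text \<open>
  Write \<open>levels a k\<close> for the set of \<open>n\<close> with \<open>1/(k+1) \<le> \<bar>a n\<bar>\<close>. A sequence \<open>f\<close> of functions
  on \<open>X\<close> that converges in the weaker but not in the stronger sense yields a witness family indexed
  by the points of \<open>X\<close>: the increasing sequences \<open>k \<mapsto> levels (\<lambda>n. f n x) k\<close> for \<open>b\<^sub>\<sigma>\<close>, their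
  disjointifications for \<open>b\<^sub>s\<close>, and the exceptional sets \<open>{n. \<epsilon> n \<le> \<bar>f n x\<bar>}\<close> of a control
  sequence \<open>\<epsilon>\<close> for \<open>add\<^sub>\<omega>\<close>. If the family were no witness, the set sequence defeating it would
  provide exactly the \<sigma>-uniform cover, resp. the control sequence, that \<open>f\<close> lacks. Conversely, a
  witness family, embedded into \<open>\<real>\<close> as a discrete (hence normal) space, carries the sequence whose
  value at \<open>E\<close> is \<open>1/(k+1)\<close> for the first \<open>k\<close> with \<open>n \<in> E k\<close> (for \<open>add\<^sub>\<omega>\<close>: the indicator of
  \<open>A\<close>), and this sequence converges in the weaker sense but not in the stronger one.
\<close>

section \<open>Ideals and level sets\<close>

lemma ideal_Un: "is_ideal I \<Longrightarrow> A \<in> I \<Longrightarrow> B \<in> I \<Longrightarrow> A \<union> B \<in> I"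
  unfolding is_ideal_def by blast

lemma ideal_subset: "is_ideal I \<Longrightarrow> A \<in> I \<Longrightarrow> B \<subseteq> A \<Longrightarrow> B \<in> I"
  unfolding is_ideal_def by blast

lemma ideal_finite: "is_ideal I \<Longrightarrow> finite A \<Longrightarrow> A \<in> I"
  unfolding is_ideal_def by blast

lemma ideal_UN:
  assumes "is_ideal I" "finite K" "\<And>k. k \<in> K \<Longrightarrow> A k \<in> I"
  shows "(\<Union>k\<in>K. A k) \<in> I"
  using assms(2,3)
proof (induction K rule: finite_induct)
  case empty
  then show ?case using ideal_finite[OF assms(1)] by simp
next
  case (insert x F)
  then show ?case using ideal_Un[OF assms(1)] by simp
qed

definition inv_Suc :: "nat \<Rightarrow> real" where
  "inv_Suc k = inverse (real (Suc k))"

lemma inv_Suc_pos [simp]: "0 < inv_Suc k"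
  by (simp add: inv_Suc_def)

lemma not_inv_Suc_le_zero [simp]: "\<not> inv_Suc k \<le> 0"
  by (simp add: inv_Suc_def)

lemma abs_inv_Suc [simp]: "\<bar>inv_Suc k\<bar> = inv_Suc k"
  by (simp add: inv_Suc_def)

lemma inv_Suc_le_iff [simp]: "inv_Suc a \<le> inv_Suc b \<longleftrightarrow> b \<le> a"
  by (simp add: inv_Suc_def)

lemma ex_inv_Suc_less: "0 < e \<Longrightarrow> \<exists>k. inv_Suc k < e"
  unfolding inv_Suc_def by (rule reals_Archimedean)

lemma ideal_thresholds_iff:
  assumes "is_ideal I" and antimono: "\<And>e e'. 0 < e \<Longrightarrow> e \<le> e' \<Longrightarrow> S e' \<subseteq> S e"
  shows "(\<forall>e>0. S e \<in> I) \<longleftrightarrow> (\<forall>k. S (inv_Suc k) \<in> I)"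
proof (intro iffI allI impI)
  fix e :: real
  assume "\<forall>k. S (inv_Suc k) \<in> I" "0 < e"
  moreover obtain k where "inv_Suc k < e"
    using ex_inv_Suc_less[OF \<open>0 < e\<close>] by blast
  ultimately show "S e \<in> I"
    using antimono[of "inv_Suc k" e] ideal_subset[OF assms(1)] by auto
qed simp

definition levels :: "(nat \<Rightarrow> real) \<Rightarrow> nat \<Rightarrow> nat set" where
  "levels a k = {n. inv_Suc k \<le> \<bar>a n\<bar>}"

lemma levels_mono: "k \<le> l \<Longrightarrow> levels a k \<subseteq> levels a l"
  unfolding levels_def using inv_Suc_le_iff order_trans by blast

lemma Iconv_iff_levels: "is_ideal I \<Longrightarrow> Iconv I a \<longleftrightarrow> (\<forall>k. levels a k \<in> I)"
  unfolding Iconv_def levels_def by (rule ideal_thresholds_iff) auto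

lemma Iu_iff_levels:
  assumes "is_ideal I"
  shows "Iu I Y f \<longleftrightarrow> (\<forall>k. (\<Union>x\<in>Y. levels (\<lambda>n. f n x) k) \<in> I)"
proof -
  have "(\<Union>x\<in>Y. levels (\<lambda>n. f n x) k) = {n. \<exists>x\<in>Y. inv_Suc k \<le> \<bar>f n x\<bar>}" for k
    unfolding levels_def by blast
  then show ?thesis
    unfolding Iu_def by (simp only:) (rule ideal_thresholds_iff[OF assms], blast intro: order_trans)
qed

lemma Iconv_inv_Suc_index:
  assumes "is_ideal I" "\<And>k. A k \<in> I" "\<And>n. n \<in> A (a n)"
  shows "Iconv I (\<lambda>n. inv_Suc (a n - 1))"
  unfolding Iconv_iff_levels[OF assms(1)]
proof
  fix K
  have "levels (\<lambda>n. inv_Suc (a n - 1)) K \<subseteq> (\<Union>k\<le>Suc K. A k)"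
  proof
    fix n
    assume "n \<in> levels (\<lambda>n. inv_Suc (a n - 1)) K"
    then have "a n \<le> Suc K"
      by (simp add: levels_def)
    then show "n \<in> (\<Union>k\<le>Suc K. A k)"
      using assms(3)[of n] by blast
  qed
  then show "levels (\<lambda>n. inv_Suc (a n - 1)) K \<in> I"
    using ideal_UN[OF assms(1)] assms(2) ideal_subset[OF assms(1)] by (metis finite_atMost)
qed

section \<open>Implications between the modes of convergence\<close>

lemma Iu_subset:
  assumes "is_ideal I" "Iu I Z f" "Y \<subseteq> Z"
  shows "Iu I Y f"
proof -
  have "{n. \<exists>x\<in>Y. e \<le> \<bar>f n x\<bar>} \<subseteq> {n. \<exists>x\<in>Z. e \<le> \<bar>f n x\<bar>}" for e
    using assms(3) by blast
  then show ?thesis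
    using assms(1,2) unfolding Iu_def by (meson ideal_subset)
qed

lemma Iu_singleton_iff: "Iu I {x} f \<longleftrightarrow> Iconv I (\<lambda>n. f n x)"
  unfolding Iu_def Iconv_def by simp

lemma Iu_UN:
  assumes "is_ideal I" "finite K" "\<And>i. i \<in> K \<Longrightarrow> Iu I (Y i) f"
  shows "Iu I (\<Union>i\<in>K. Y i) f"
proof -
  have "(\<Union>x\<in>(\<Union>i\<in>K. Y i). levels (\<lambda>n. f n x) k) = (\<Union>i\<in>K. \<Union>x\<in>Y i. levels (\<lambda>n. f n x) k)"
    for k
    by blast
  then show ?thesis
    using assms by (simp add: Iu_iff_levels ideal_UN)
qed

lemma Isu_imp_Ip: "is_ideal I \<Longrightarrow> Isu I X f \<Longrightarrow> Ip I X f"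
  unfolding Isu_def Ip_def by (metis Iu_singleton_iff Iu_subset UN_E empty_subsetI insert_subset)

lemma Iqn_imp_Ip:
  assumes I: "is_ideal I" and "Iqn I X f"
  shows "Ip I X f"
proof -
  obtain eps where eps: "Iconv I eps" and exc: "\<And>x. x \<in> X \<Longrightarrow> {n. eps n \<le> \<bar>f n x\<bar>} \<in> I"
    using assms(2) unfolding Iqn_def by blast
  have "{n. e \<le> \<bar>f n x\<bar>} \<subseteq> {n. eps n \<le> \<bar>f n x\<bar>} \<union> {n. e \<le> \<bar>eps n\<bar>}" for e x
    by auto
  then show ?thesis
    using eps exc ideal_Un[OF I] ideal_subset[OF I] unfolding Ip_def Iconv_def by meson
qed

lemma Isu_imp_Iqn:
  assumes I: "is_ideal I" and "Isu I X f"
  shows "Iqn I X f"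
proof -
  obtain Xk :: "nat \<Rightarrow> 'a set" where X: "X = (\<Union>k. Xk k)" and Xk: "\<And>k. Iu I (Xk k) f"
    using assms(2) unfolding Isu_def by blast
  define Y where "Y j = (\<Union>i\<le>j. Xk i)" for j
  \<comment> \<open>The \<open>{..k}\<close> part makes every \<open>n\<close> enter some \<open>C k\<close>. The control sequence sits one level
    above the first \<open>C\<close> containing \<open>n\<close>, so a point of \<open>Y j\<close> can only be exceptional at \<open>n \<in> C j\<close>.\<close>
  define C where "C k = (\<Union>x\<in>Y k. levels (\<lambda>n. f n x) k) \<union> {..k}" for k
  have C_ideal: "C k \<in> I" for k
  proof -
    have "Iu I (Y k) f"
      unfolding Y_def using Xk by (simp add: Iu_UN[OF I])
    then show ?thesis
      unfolding C_def by (simp add: Iu_iff_levels[OF I] ideal_Un[OF I] ideal_finite[OF I])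
  qed
  have C_mono: "C i \<subseteq> C j" if "i \<le> j" for i j
  proof -
    have "Y i \<subseteq> Y j"
      unfolding Y_def using that by (intro UN_mono) auto
    then show ?thesis
      unfolding C_def using levels_mono[OF that] that by fastforce
  qed
  define a where "a n = (LEAST k. n \<in> C k)" for n
  have C_a: "n \<in> C (a n)" for n
    unfolding a_def by (rule LeastI[of _ n]) (simp add: C_def)
  have exceptional: "{n. inv_Suc (a n - 1) \<le> \<bar>f n x\<bar>} \<subseteq> C j" if "x \<in> Y j" for x j
  proof
    fix n
    assume n: "n \<in> {n. inv_Suc (a n - 1) \<le> \<bar>f n x\<bar>}"
    have "a n \<le> j"
    proof (rule ccontr)
      assume "\<not> a n \<le> j"
      then have "x \<in> Y (a n - 1)"
        using that unfolding Y_def by auto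
      then have "n \<in> C (a n - 1)"
        using n unfolding C_def levels_def by blast
      then have "a n \<le> a n - 1"
        unfolding a_def by (rule Least_le)
      then show False
        using \<open>\<not> a n \<le> j\<close> by linarith
    qed
    then show "n \<in> C j"
      using C_a C_mono by blast
  qed
  have "Iconv I (\<lambda>n. inv_Suc (a n - 1))"
    using Iconv_inv_Suc_index[of I C a] I C_ideal C_a by blast
  moreover have "{n. inv_Suc (a n - 1) \<le> \<bar>f n x\<bar>} \<in> I" if "x \<in> X" for x
  proof -
    obtain j where "x \<in> Y j"
      using \<open>x \<in> X\<close> unfolding X Y_def by blast
    then show ?thesis
      by (rule ideal_subset[OF I C_ideal exceptional])
  qed
  ultimately show ?thesis
    unfolding Iqn_def by (intro exI[of _ "\<lambda>n. inv_Suc (a n - 1)"]) simp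
qed

section \<open>Witness families from sequences of functions\<close>

lemma bsigma_witness_levels:
  assumes I: "is_ideal I" and "Ip I T f" and not_Isu: "\<not> Isu I T f"
  shows "bsigma_witness I I ((\<lambda>x. levels (\<lambda>n. f n x)) ` T)"
proof -
  let ?L = "\<lambda>x. levels (\<lambda>n. f n x)"
  have "?L x \<in> MM I" if "x \<in> T" for x
    using assms(2) that levels_mono[of _ "Suc _"]
    unfolding MM_def Ip_def by (simp add: Iconv_iff_levels[OF I])
  moreover have "\<exists>x\<in>T. infinite {k. \<not> ?L x k \<subseteq> A k}" if A: "A \<in> MM I" for A
  proof (rule ccontr)
    assume "\<not> ?thesis"
    then have eventually_below: "\<exists>m. \<forall>k\<ge>m. ?L x k \<subseteq> A k" if "x \<in> T" for x
      using that by (metis (mono_tags, lifting) finite_nat_set_iff_bounded mem_Collect_eq not_le)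
    let ?T = "\<lambda>m. {x\<in>T. \<forall>k\<ge>m. ?L x k \<subseteq> A k}"
    have cover: "T = (\<Union>m. ?T m)"
      using eventually_below by blast
    have "Iu I (?T m) f" for m
    proof -
      have "?L x k \<subseteq> A (max m k)" if "x \<in> ?T m" for x k
      proof -
        have "?L x k \<subseteq> ?L x (max m k)"
          by (rule levels_mono) simp
        also have "\<dots> \<subseteq> A (max m k)"
          using that by simp
        finally show ?thesis .
      qed
      then have "(\<Union>x\<in>?T m. ?L x k) \<subseteq> A (max m k)" for k
        by blast
      moreover have "A k \<in> I" for k
        using A unfolding MM_def by blast
      ultimately show ?thesis
        unfolding Iu_iff_levels[OF I] by (meson ideal_subset[OF I])
    qed
    then have "Isu I T f"
      unfolding Isu_def using cover by blast
    then show False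
      using not_Isu by blast
  qed
  ultimately show ?thesis
    unfolding bsigma_witness_def by blast
qed

lemma UN_disjointed_levels: "(\<Union>i\<le>n. disjointed (levels a) i) = levels a n"
proof -
  have "(\<Union>i\<le>n. disjointed (levels a) i) = (\<Union>i\<le>n. levels a i)"
    using finite_UN_disjointed_eq[of "levels a" "Suc n"] by (simp add: atLeast0LessThan lessThan_Suc_atMost)
  also have "\<dots> = levels a n"
    using levels_mono by blast
  finally show ?thesis .
qed

lemma bs_witness_disjointed_levels:
  assumes I: "is_ideal I" and "Ip I T f" and not_Iqn: "\<not> Iqn I T f"
  shows "bs_witness I I I ((\<lambda>x. disjointed (levels (\<lambda>n. f n x))) ` T)"
proof -
  let ?L = "\<lambda>x. levels (\<lambda>n. f n x)"
  have "disjointed (?L x) \<in> hatP I" if "x \<in> T" for x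
    using assms(2) that unfolding hatP_def Ip_def Iconv_iff_levels[OF I]
    by (auto intro: ideal_subset[OF I _ disjointed_subset] disjoint_family_disjointed)
  moreover have "\<exists>x\<in>T. (\<Union>n. A (Suc n) \<inter> (\<Union>i\<le>n. disjointed (?L x) i)) \<notin> I"
    if A: "A \<in> PP I" for A
  proof (rule ccontr)
    assume "\<not> ?thesis"
    then have small: "(\<Union>n. A (Suc n) \<inter> ?L x n) \<in> I" if "x \<in> T" for x
      using that by (simp add: UN_disjointed_levels)
    have A_ideal: "A k \<in> I" for k
      using A unfolding PP_def hatP_def by blast
    define a where "a n = (SOME k. n \<in> A k)" for n
    have A_a: "n \<in> A (a n)" for n
    proof -
      have "\<exists>k. n \<in> A k"
        using A unfolding PP_def by blast
      then show ?thesis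
        unfolding a_def by (rule someI_ex)
    qed
    have exceptional: "{n. inv_Suc (a n - 1) \<le> \<bar>f n x\<bar>} \<subseteq> (\<Union>n. A (Suc n) \<inter> ?L x n) \<union> A 0" for x
    proof
      fix n
      assume n: "n \<in> {n. inv_Suc (a n - 1) \<le> \<bar>f n x\<bar>}"
      show "n \<in> (\<Union>n. A (Suc n) \<inter> ?L x n) \<union> A 0"
      proof (cases "a n")
        case 0
        then show ?thesis
          using A_a[of n] by simp
      next
        case (Suc j)
        then have "n \<in> A (Suc j) \<inter> ?L x j"
          using A_a[of n] n by (simp add: levels_def)
        then show ?thesis
          by blast
      qed
    qed
    have "Iconv I (\<lambda>n. inv_Suc (a n - 1))"
      using Iconv_inv_Suc_index[of I A a] I A_ideal A_a by blast
    moreover have "{n. inv_Suc (a n - 1) \<le> \<bar>f n x\<bar>} \<in> I" if "x \<in> T" for x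
      by (rule ideal_subset[OF I ideal_Un[OF I small[OF that] A_ideal] exceptional])
    ultimately have "Iqn I T f"
      unfolding Iqn_def by (intro exI[of _ "\<lambda>n. inv_Suc (a n - 1)"]) simp
    then show False
      using not_Iqn by blast
  qed
  ultimately show ?thesis
    unfolding bs_witness_def by blast
qed

lemma addw_witness_exceptional_sets:
  assumes I: "is_ideal I" and eps: "Iconv I eps"
    and exceptional: "\<And>x. x \<in> T \<Longrightarrow> {n. eps n \<le> \<bar>f n x\<bar>} \<in> I"
    and not_Isu: "\<not> Isu I T f"
  shows "addw_witness I I ((\<lambda>x. {n. eps n \<le> \<bar>f n x\<bar>}) ` T)"
proof -
  have "\<exists>x\<in>T. \<forall>m. \<not> {n. eps n \<le> \<bar>f n x\<bar>} \<subseteq> B m" if B: "\<And>m. B m \<in> I" for B :: "nat \<Rightarrow> nat set"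
  proof (rule ccontr)
    let ?T = "\<lambda>m. {x\<in>T. {n. eps n \<le> \<bar>f n x\<bar>} \<subseteq> B m}"
    assume "\<not> ?thesis"
    then have cover: "T = (\<Union>m. ?T m)"
      by blast
    have "Iu I (?T m) f" for m
      unfolding Iu_def
    proof (intro allI impI)
      fix e :: real
      assume "0 < e"
      have "{n. e \<le> \<bar>eps n\<bar>} \<in> I"
        using eps \<open>0 < e\<close> unfolding Iconv_def by blast
      then have "B m \<union> {n. e \<le> \<bar>eps n\<bar>} \<in> I"
        by (rule ideal_Un[OF I B])
      moreover have "{n. \<exists>x\<in>?T m. e \<le> \<bar>f n x\<bar>} \<subseteq> B m \<union> {n. e \<le> \<bar>eps n\<bar>}"
        by force
      ultimately show "{n. \<exists>x\<in>?T m. e \<le> \<bar>f n x\<bar>} \<in> I"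
        by (rule ideal_subset[OF I])
    qed
    then have "Isu I T f"
      unfolding Isu_def using cover by blast
    then show False
      using not_Isu by blast
  qed
  moreover have "(\<lambda>x. {n. eps n \<le> \<bar>f n x\<bar>}) ` T \<subseteq> I"
    using exceptional by blast
  ultimately show ?thesis
    unfolding addw_witness_def by (simp add: image_iff)
qed

section \<open>Sequences of functions from witness families\<close>

definition entry_height :: "(nat \<Rightarrow> nat set) \<Rightarrow> nat \<Rightarrow> real" where
  "entry_height E n = (if \<exists>k. n \<in> E k then inv_Suc (LEAST k. n \<in> E k) else 0)"

lemma levels_entry_height: "levels (\<lambda>n. entry_height E n) K = (\<Union>k\<le>K. E k)"
proof (intro set_eqI iffI)
  fix n
  assume "n \<in> levels (\<lambda>n. entry_height E n) K"
  then have "\<exists>k. n \<in> E k" and "(LEAST k. n \<in> E k) \<le> K"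
    by (auto simp: levels_def entry_height_def split: if_splits)
  then show "n \<in> (\<Union>k\<le>K. E k)"
    using LeastI_ex[of "\<lambda>k. n \<in> E k"] by blast
next
  fix n
  assume "n \<in> (\<Union>k\<le>K. E k)"
  then obtain k where "k \<le> K" "n \<in> E k"
    by blast
  moreover have "(LEAST k. n \<in> E k) \<le> k"
    using \<open>n \<in> E k\<close> by (rule Least_le)
  ultimately show "n \<in> levels (\<lambda>n. entry_height E n) K"
    by (auto simp: levels_def entry_height_def)
qed

lemma Ip_entry_height:
  assumes "is_ideal I" "\<And>E k. E \<in> \<E> \<Longrightarrow> E k \<in> I"
  shows "Ip I \<E> (\<lambda>n E. entry_height E n)"
  unfolding Ip_def Iconv_iff_levels[OF assms(1)] levels_entry_height
proof (intro ballI allI)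
  fix E K
  assume "E \<in> \<E>"
  then show "(\<Union>k\<le>K. E k) \<in> I"
    using ideal_UN[OF assms(1) finite_atMost, of K E] assms(2) by blast
qed

lemma not_Isu_entry_height:
  assumes I: "is_ideal I" and w: "bsigma_witness I I \<E>"
  shows "\<not> Isu I \<E> (\<lambda>n E. entry_height E n)"
proof
  assume "Isu I \<E> (\<lambda>n E. entry_height E n)"
  then obtain Xk :: "nat \<Rightarrow> (nat \<Rightarrow> nat set) set"
    where cover: "\<E> = (\<Union>m. Xk m)" and Xk: "\<And>m. Iu I (Xk m) (\<lambda>n E. entry_height E n)"
    unfolding Isu_def by blast
  define A where "A k = (\<Union>m\<le>k. \<Union>E\<in>Xk m. E k)" for k
  have "A k \<in> I" for k
  proof -
    have "(\<Union>E\<in>Xk m. E k) \<subseteq> (\<Union>E\<in>Xk m. levels (\<lambda>n. entry_height E n) k)" for m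
      unfolding levels_entry_height by blast
    then have "(\<Union>E\<in>Xk m. E k) \<in> I" for m
      using Xk[of m] unfolding Iu_iff_levels[OF I] by (meson ideal_subset[OF I])
    then show ?thesis
      unfolding A_def by (simp add: ideal_UN[OF I])
  qed
  moreover have "A k \<subseteq> A (Suc k)" for k
  proof -
    have "E k \<subseteq> E (Suc k)" if "E \<in> \<E>" for E
      using w that unfolding bsigma_witness_def MM_def by blast
    then show ?thesis
      unfolding A_def cover by force
  qed
  ultimately have "A \<in> MM I"
    unfolding MM_def by blast
  then obtain E where "E \<in> \<E>" and infinite: "infinite {k. \<not> E k \<subseteq> A k}"
    using w unfolding bsigma_witness_def by blast
  then obtain m where "E \<in> Xk m"
    using cover by blast
  then have "{k. \<not> E k \<subseteq> A k} \<subseteq> {..<m}"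
    unfolding A_def by force
  then show False
    using infinite finite_subset by blast
qed

lemma not_Iqn_entry_height:
  assumes I: "is_ideal I" and w: "bs_witness I I I \<E>"
  shows "\<not> Iqn I \<E> (\<lambda>n E. entry_height E n)"
proof
  assume "Iqn I \<E> (\<lambda>n E. entry_height E n)"
  then obtain eps where eps_pos: "\<And>n. 0 < eps n" and eps: "Iconv I eps"
    and exceptional: "\<And>E. E \<in> \<E> \<Longrightarrow> {n. eps n \<le> \<bar>entry_height E n\<bar>} \<in> I"
    unfolding Iqn_def by blast
  define A where "A = disjointed (levels eps)"
  have "\<exists>k. n \<in> levels eps k" for n
  proof -
    obtain k where "inv_Suc k < eps n"
      using ex_inv_Suc_less[OF eps_pos] by blast
    then show ?thesis
      using eps_pos[of n] by (auto simp: levels_def intro!: exI[of _ k])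
  qed
  then have "(\<Union>k. A k) = UNIV"
    unfolding A_def UN_disjointed_eq by blast
  moreover have "A k \<in> I" for k
  proof -
    have "levels eps k \<in> I"
      using eps unfolding Iconv_iff_levels[OF I] ..
    then show ?thesis
      unfolding A_def by (rule ideal_subset[OF I _ disjointed_subset])
  qed
  ultimately have "A \<in> PP I"
    unfolding PP_def hatP_def A_def by (simp add: disjoint_family_disjointed)
  then obtain E where "E \<in> \<E>" and large: "(\<Union>n. A (Suc n) \<inter> (\<Union>i\<le>n. E i)) \<notin> I"
    using w unfolding bs_witness_def by blast
  have "(\<Union>n. A (Suc n) \<inter> (\<Union>i\<le>n. E i)) \<subseteq> {n. eps n \<le> \<bar>entry_height E n\<bar>}"
  proof (intro subsetI)
    fix m
    assume "m \<in> (\<Union>n. A (Suc n) \<inter> (\<Union>i\<le>n. E i))"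
    then obtain n where "m \<in> A (Suc n)" "m \<in> levels (\<lambda>n. entry_height E n) n"
      unfolding levels_entry_height by blast
    then have "m \<notin> levels eps n" "inv_Suc n \<le> \<bar>entry_height E m\<bar>"
      unfolding A_def disjointed_def levels_def by auto
    then show "m \<in> {n. eps n \<le> \<bar>entry_height E n\<bar>}"
      using eps_pos[of m] by (simp add: levels_def)
  qed
  then show False
    using large ideal_subset[OF I exceptional[OF \<open>E \<in> \<E>\<close>]] by blast
qed

lemma Iqn_indicator:
  assumes I: "is_ideal I" and "\<A> \<subseteq> I"
  shows "Iqn I \<A> (\<lambda>n A. indicator A n)"
proof -
  have "Iconv I inv_Suc"
    unfolding Iconv_iff_levels[OF I] levels_def
    by (simp add: ideal_finite[OF I] atMost_def[symmetric])
  moreover have "{n. inv_Suc n \<le> \<bar>indicator A n\<bar>} \<in> I" if "A \<in> \<A>" for A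
  proof -
    have "A \<in> I"
      using assms(2) that by blast
    moreover have "{n. inv_Suc n \<le> \<bar>indicator A n\<bar>} \<subseteq> A"
      by (auto simp: indicator_def)
    ultimately show ?thesis
      by (rule ideal_subset[OF I])
  qed
  ultimately show ?thesis
    unfolding Iqn_def by (intro exI[of _ inv_Suc]) auto
qed

lemma not_Isu_indicator:
  assumes I: "is_ideal I" and w: "addw_witness I I \<A>"
  shows "\<not> Isu I \<A> (\<lambda>n A. indicator A n)"
proof
  assume "Isu I \<A> (\<lambda>n A. indicator A n)"
  then obtain Xk :: "nat \<Rightarrow> nat set set"
    where cover: "\<A> = (\<Union>m. Xk m)" and Xk: "\<And>m. Iu I (Xk m) (\<lambda>n A. indicator A n)"
    unfolding Isu_def by blast
  have levels_0: "levels (\<lambda>n. indicator A n) 0 = A" for A :: "nat set"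
    by (auto simp: levels_def inv_Suc_def indicator_def)
  have "\<Union>(Xk m) \<in> I" for m
  proof -
    have "(\<Union>A\<in>Xk m. levels (\<lambda>n. indicator A n) 0) \<in> I"
      using Xk[of m] unfolding Iu_iff_levels[OF I] ..
    then show ?thesis
      by (simp add: levels_0)
  qed
  then have "\<exists>A\<in>\<A>. \<forall>m. \<not> A \<subseteq> \<Union>(Xk m)"
    using w unfolding addw_witness_def by (blast dest: spec[of _ "\<lambda>m. \<Union>(Xk m)"])
  then show False
    using cover by blast
qed

section \<open>Realisation on discrete subspaces of the reals\<close>

lemma Iu_image: "Iu I (j ` S) f \<longleftrightarrow> Iu I S (\<lambda>n x. f n (j x))"
  unfolding Iu_def by simp

lemma Ip_image: "Ip I (j ` S) f \<longleftrightarrow> Ip I S (\<lambda>n x. f n (j x))"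
  unfolding Ip_def by simp

lemma Iqn_image: "Iqn I (j ` S) f \<longleftrightarrow> Iqn I S (\<lambda>n x. f n (j x))"
  unfolding Iqn_def by simp

lemma Isu_image:
  fixes j :: "'b \<Rightarrow> 'a" and f :: "nat \<Rightarrow> 'a \<Rightarrow> real"
  assumes "is_ideal I"
  shows "Isu I (j ` S) f \<longleftrightarrow> Isu I S (\<lambda>n x. f n (j x))"
proof
  assume "Isu I (j ` S) f"
  then obtain Xk :: "nat \<Rightarrow> 'a set" where cover: "j ` S = (\<Union>k. Xk k)" and Xk: "\<And>k. Iu I (Xk k) f"
    unfolding Isu_def by blast
  have "Iu I (S \<inter> j -` Xk k) (\<lambda>n x. f n (j x))" for k
  proof -
    have "Iu I (j ` (S \<inter> j -` Xk k)) f"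
      by (rule Iu_subset[OF assms Xk]) blast
    then show ?thesis
      unfolding Iu_image .
  qed
  moreover have "S = (\<Union>k. S \<inter> j -` Xk k)"
    using cover by blast
  ultimately show "Isu I S (\<lambda>n x. f n (j x))"
    unfolding Isu_def by (intro exI[of _ "\<lambda>k. S \<inter> j -` Xk k"]) blast
next
  assume "Isu I S (\<lambda>n x. f n (j x))"
  then obtain Yk :: "nat \<Rightarrow> 'b set" where "S = (\<Union>k. Yk k)" and "\<And>k. Iu I (Yk k) (\<lambda>n x. f n (j x))"
    unfolding Isu_def by blast
  then have "j ` S = (\<Union>k. j ` Yk k)" and "\<And>k. Iu I (j ` Yk k) f"
    by (auto simp: Iu_image)
  then show "Isu I (j ` S) f"
    unfolding Isu_def by (intro exI[of _ "\<lambda>k. j ` Yk k"]) blast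
qed

lemma discrete_space_not_in_class:
  fixes j :: "'b \<Rightarrow> real" and F :: "nat \<Rightarrow> 'b \<Rightarrow> real"
  assumes "inj j"
    and \<alpha>: "\<And>f. \<alpha> (j ` S) f \<longleftrightarrow> \<alpha>' S (\<lambda>n x. f n (j x))"
    and \<beta>: "\<And>f. \<beta> (j ` S) f \<longleftrightarrow> \<beta>' S (\<lambda>n x. f n (j x))"
    and "\<alpha>' S F" "\<not> \<beta>' S F"
  shows "\<exists>X :: real topology. normal_T2 X \<and> \<not> in_class \<alpha> \<beta> X \<and> topspace X \<lesssim> S"
proof (intro exI conjI)
  let ?X = "discrete_topology (j ` S)"
  have "(\<lambda>n x. (F n \<circ> inv j) (j x)) = F"
    using \<open>inj j\<close> by simp
  then have "\<alpha> (topspace ?X) (\<lambda>n. F n \<circ> inv j)" "\<not> \<beta> (topspace ?X) (\<lambda>n. F n \<circ> inv j)"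
    using \<alpha> \<beta> assms(4,5) by simp_all
  \<comment> \<open>Every function on a discrete space is continuous.\<close>
  then show "\<not> in_class \<alpha> \<beta> ?X"
    unfolding in_class_def by (auto intro!: exI[of _ "\<lambda>n. F n \<circ> inv j"])
  show "normal_T2 ?X"
    unfolding normal_T2_def by (simp add: normal_space_discrete_topology)
  show "topspace ?X \<lesssim> S"
    by (simp add: image_lepoll)
qed

lemma ex_inj_nat_set_real: "\<exists>j :: nat set \<Rightarrow> real. inj j"
  using nat_sets_eqpoll_reals unfolding eqpoll_def by (meson bij_betw_imp_inj_on)

lemma inj_Sigma_encode: "inj (\<lambda>F :: nat \<Rightarrow> nat set. prod_encode ` Sigma UNIV F)"
proof (rule injI)
  fix F G :: "nat \<Rightarrow> nat set"
  assume "prod_encode ` Sigma UNIV F = prod_encode ` Sigma UNIV G"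
  then have "Sigma UNIV F = Sigma UNIV G"
    by (simp add: inj_image_eq_iff inj_prod_encode)
  then have "m \<in> F k \<longleftrightarrow> m \<in> G k" for k m
    by blast
  then show "F = G"
    by (intro ext set_eqI)
qed

lemma ex_inj_nat_set_seq_real: "\<exists>j :: (nat \<Rightarrow> nat set) \<Rightarrow> real. inj j"
proof -
  obtain j :: "nat set \<Rightarrow> real" where "inj j"
    using ex_inj_nat_set_real by blast
  then show ?thesis
    using inj_compose[OF _ inj_Sigma_encode] by blast
qed

lemma not_in_classE:
  assumes "\<not> in_class \<alpha> \<beta> X" and "\<And>f. \<beta> (topspace X) f \<Longrightarrow> \<alpha> (topspace X) f"
  obtains f where "\<alpha> (topspace X) f" "\<not> \<beta> (topspace X) f"
  using assms unfolding in_class_def by blast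

lemma bsigma_witness_of_not_in_class:
  assumes I: "is_ideal I" and "\<not> in_class (Ip I) (Isu I) X"
  shows "\<exists>\<E>. bsigma_witness I I \<E> \<and> \<E> \<lesssim> topspace X"
proof -
  obtain f where "Ip I (topspace X) f" "\<not> Isu I (topspace X) f"
    using assms(2) Isu_imp_Ip[OF I] by (rule not_in_classE)
  then show ?thesis
    using bsigma_witness_levels[OF I] image_lepoll by blast
qed

lemma bs_witness_of_not_in_class:
  assumes I: "is_ideal I" and "\<not> in_class (Ip I) (Iqn I) X"
  shows "\<exists>\<E>. bs_witness I I I \<E> \<and> \<E> \<lesssim> topspace X"
proof -
  obtain f where "Ip I (topspace X) f" "\<not> Iqn I (topspace X) f"
    using assms(2) Iqn_imp_Ip[OF I] by (rule not_in_classE)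
  then show ?thesis
    using bs_witness_disjointed_levels[OF I] image_lepoll by blast
qed

lemma addw_witness_of_not_in_class:
  assumes I: "is_ideal I" and "\<not> in_class (Iqn I) (Isu I) X"
  shows "\<exists>\<A>. addw_witness I I \<A> \<and> \<A> \<lesssim> topspace X"
proof -
  obtain f where "Iqn I (topspace X) f" and not_Isu: "\<not> Isu I (topspace X) f"
    using assms(2) Isu_imp_Iqn[OF I] by (rule not_in_classE)
  then obtain eps where "Iconv I eps" "\<And>x. x \<in> topspace X \<Longrightarrow> {n. eps n \<le> \<bar>f n x\<bar>} \<in> I"
    unfolding Iqn_def by blast
  then show ?thesis
    using addw_witness_exceptional_sets[OF I _ _ not_Isu] image_lepoll by blast
qed

lemma not_in_class_of_bsigma_witness:
  assumes I: "is_ideal I" and w: "bsigma_witness I I \<E>"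
  shows "\<exists>X :: real topology. normal_T2 X \<and> \<not> in_class (Ip I) (Isu I) X \<and> topspace X \<lesssim> \<E>"
proof -
  obtain j :: "(nat \<Rightarrow> nat set) \<Rightarrow> real" where "inj j"
    using ex_inj_nat_set_seq_real by blast
  have "E k \<in> I" if "E \<in> \<E>" for E k
    using w that unfolding bsigma_witness_def MM_def by blast
  then have "Ip I \<E> (\<lambda>n E. entry_height E n)"
    by (rule Ip_entry_height[OF I])
  then show ?thesis
    using discrete_space_not_in_class[where \<alpha>="Ip I" and \<alpha>'="Ip I" and \<beta>="Isu I" and \<beta>'="Isu I",
        OF \<open>inj j\<close> Ip_image Isu_image[OF I]
        _ not_Isu_entry_height[OF I w]] by blast
qed

lemma not_in_class_of_bs_witness:
  assumes I: "is_ideal I" and w: "bs_witness I I I \<E>"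
  shows "\<exists>X :: real topology. normal_T2 X \<and> \<not> in_class (Ip I) (Iqn I) X \<and> topspace X \<lesssim> \<E>"
proof -
  obtain j :: "(nat \<Rightarrow> nat set) \<Rightarrow> real" where "inj j"
    using ex_inj_nat_set_seq_real by blast
  have "E k \<in> I" if "E \<in> \<E>" for E k
    using w that unfolding bs_witness_def hatP_def by blast
  then have "Ip I \<E> (\<lambda>n E. entry_height E n)"
    by (rule Ip_entry_height[OF I])
  then show ?thesis
    using discrete_space_not_in_class[where \<alpha>="Ip I" and \<alpha>'="Ip I" and \<beta>="Iqn I" and \<beta>'="Iqn I",
        OF \<open>inj j\<close> Ip_image Iqn_image
        _ not_Iqn_entry_height[OF I w]] by blast
qed

lemma not_in_class_of_addw_witness:
  assumes I: "is_ideal I" and w: "addw_witness I I \<A>"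
  shows "\<exists>X :: real topology. normal_T2 X \<and> \<not> in_class (Iqn I) (Isu I) X \<and> topspace X \<lesssim> \<A>"
proof -
  obtain j :: "nat set \<Rightarrow> real" where "inj j"
    using ex_inj_nat_set_real by blast
  have "\<A> \<subseteq> I"
    using w unfolding addw_witness_def by blast
  then have "Iqn I \<A> (\<lambda>n A. indicator A n)"
    by (rule Iqn_indicator[OF I])
  then show ?thesis
    using discrete_space_not_in_class[where \<alpha>="Iqn I" and \<alpha>'="Iqn I" and \<beta>="Isu I" and \<beta>'="Isu I",
        OF \<open>inj j\<close> Iqn_image Isu_image[OF I]
        _ not_Isu_indicator[OF I w]] by blast
qed

theorem corollary4p7:
  fixes I :: "nat set set"
  assumes "is_ideal I"
  shows
   "((\<forall>X :: 'a topology. normal_T2 X \<and> \<not> in_class (Ip I) (Isu I) X \<longrightarrow>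
        (\<exists>\<E>. bsigma_witness I I \<E> \<and> \<E> \<lesssim> topspace X)) \<and>
     (\<forall>\<E>. bsigma_witness I I \<E> \<longrightarrow>
        (\<exists>X :: real topology. normal_T2 X \<and> \<not> in_class (Ip I) (Isu I) X \<and> topspace X \<lesssim> \<E>)))
  \<and> ((\<forall>X :: 'a topology. normal_T2 X \<and> \<not> in_class (Ip I) (Iqn I) X \<longrightarrow>
        (\<exists>\<E>. bs_witness I I I \<E> \<and> \<E> \<lesssim> topspace X)) \<and>
     (\<forall>\<E>. bs_witness I I I \<E> \<longrightarrow>
        (\<exists>X :: real topology. normal_T2 X \<and> \<not> in_class (Ip I) (Iqn I) X \<and> topspace X \<lesssim> \<E>)))
  \<and> ((\<forall>X :: 'a topology. normal_T2 X \<and> \<not> in_class (Iqn I) (Isu I) X \<longrightarrow>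
        (\<exists>\<A>. addw_witness I I \<A> \<and> \<A> \<lesssim> topspace X)) \<and>
     (\<forall>\<A>. addw_witness I I \<A> \<longrightarrow>
        (\<exists>X :: real topology. normal_T2 X \<and> \<not> in_class (Iqn I) (Isu I) X \<and> topspace X \<lesssim> \<A>)))"
  using bsigma_witness_of_not_in_class[OF assms] not_in_class_of_bsigma_witness[OF assms]
    bs_witness_of_not_in_class[OF assms] not_in_class_of_bs_witness[OF assms]
    addw_witness_of_not_in_class[OF assms] not_in_class_of_addw_witness[OF assms]
  by blast

end
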